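(* Assume $\epsilon\in(0,1/3)$, $p\ge2$, $\nu>0$, $T\ge 4\max\{\log\frac1{1-\epsilon},\log p\}$, and the inlier stability condition. Let $\delta_T=4\nu\big(\sqrt{\log(1/(1-\epsilon))/T}+\sqrt{\log p/T}\big)$. Let $\hat\mu^{[1]}\in\operatorname{conv}\{g_1,\dots,g_N\}$ and, for $s\ge1$, let $\bar w^{[s]}\in\Delta_{N,\epsilon}$ satisfy $\gamma(\bar w^{[s]};\hat\mu^{[s]})\le\mathrm{OPT}(\hat\mu^{[s]})+\delta_T$ (this holds when $\bar w^{[s]}$ is the output of the MW–MMW rounds with center $\hat\mu^{[s]}$, uniform initialization, $\eta_w=\frac1\nu\sqrt{\log(1/(1-\epsilon))/T}$, $\eta_\rho=\frac1\nu\sqrt{\log p/T}$), and set $\hat\mu^{[s+1]}=\sum_{n=1}^N\bar w^{[s]}_ng_n$. Let $e^{[s]}=\|\hat\mu^{[s]}-\mu_g\|_2$ and $\alpha_\epsilon=\sqrt{\epsilon/(1-2\epsilon)}$. Then for all $s\ge1$, $$e^{[s+1]}\le\alpha_\epsilon e^{[s]}+R_{\epsilon,T},\qquad R_{\epsilon,T}=(1+\alpha_\epsilon)\delta_\mu+\alpha_\epsilon\sqrt{\|\Sigma_g\|_{op}+\delta_\Sigma+\delta_T}.$$ Consequently $e^{[s]}\le\alpha_\epsilon^{s-1}e^{[1]}+\frac{1-\alpha_\epsilon^{s-1}}{1-\alpha_\epsilon}R_{\epsilon,T}$ for all $s\ge1$, and $\limsup_{s\to\infty}e^{[s]}\le 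R_\infty:=\frac{R_{\epsilon,T}}{1-\alpha_\epsilon}$.
   Context: Fix $N\ge1$, $p\ge1$, $\epsilon\in[0,1)$ and vectors $g_1,\dots,g_N\in\mathbb R^p$; $\nu=\max_{i,j}\|g_i-g_j\|_2^2$. For an index set $I$ and $\epsilon'\in[0,1)$, $\Delta_{I,\epsilon'}=\{w\in\mathbb R^{I}:\sum_{n\in I}w_n=1,\ 0\le w_n\le\frac1{(1-\epsilon')|I|}\}$, and $\Delta_{N,\epsilon}=\Delta_{[N],\epsilon}$. Density matrices $\mathfrak D_p=\{\rho\succeq0\text{ symmetric},\mathrm{Tr}\,\rho=1\}$, $\langle A,B\rangle=\mathrm{Tr}(A^\top B)$. For $\hat\mu\in\mathbb R^p$: $S(w;\hat\mu)=\sum_n w_n(g_n-\hat\mu)(g_n-\hat\mu)^\top$, $\gamma(w;\hat\mu)=\|S(w;\hat\mu)\|_{op}$, $\mathrm{OPT}(\hat\mu)=\min_{w\in\Delta_{N,\epsilon}}\max_{\rho\in\mathfrak D_p}\langle S(w;\hat\mu),\rho\rangle$. MW–MMW rounds for center $\hat\mu$: $z_n=g_n-\hat\mu$, $w^{(1)}=(1/N,\dots,1/N)$; for $t=1,\dots,T$: $S^{(t)}=\sum_nw^{(t)}_nz_nz_n^\top$, $\rho^{(t)}=\exp(\eta_\rho\sum_{t'\le t}S^{(t')})/\mathrm{Tr}\exp(\eta_\rho\sum_{t'\le t}S^{(t')})$, $m^{(t)}_n=z_n^\top\rho^{(t)}z_n$, $\tilde w^{(t)}_n=w^{(t)}_n(1-\eta_wm^{(t)}_n)$,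 $w^{(t+1)}=\arg\min_{w\in\Delta_{N,\epsilon}}\sum_nw_n\log(w_n/\tilde w^{(t)}_n)$; output $\bar w=\frac1T\sum_tw^{(t)}$. Inlier stability condition: there is a partition $[N]=I_{in}\sqcup I_{out}$ with $|I_{out}|\le\epsilon N$, a vector $\mu_g\in\mathbb R^p$, a symmetric PSD $\Sigma_g$ and constants $\delta_\mu,\delta_\Sigma\ge0$ such that for every $w\in\Delta_{I_{in},\epsilon/(1-\epsilon)}$: $\|\sum_{n\in I_{in}}w_n(g_n-\mu_g)\|_2\le\delta_\mu$ and $\sum_{n\in I_{in}}w_n(g_n-\mu_g)(g_n-\mu_g)^\top\preceq\Sigma_g+\delta_\Sigma I_p$. *)

theory Defs
  imports "HOL-Analysis.Analysis"
begin


definition outer :: "real^('p::finite) \<Rightarrow> real^('p::finite) \<Rightarrow> real^('p::finite)^'p" where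
  "outer u v = (\<chi> i j. u $ i * v $ j)"

definition psd :: "real^('p::finite)^'p \<Rightarrow> bool" where
  "psd A \<longleftrightarrow> (\<forall>x. 0 \<le> x \<bullet> (A *v x))"

definition symmetric_mat :: "real^('p::finite)^'p \<Rightarrow> bool" where
  "symmetric_mat A \<longleftrightarrow> transpose A = A"

definition loewner_le :: "real^('p::finite)^'p \<Rightarrow> real^('p::finite)^'p \<Rightarrow> bool" where
  "loewner_le A B \<longleftrightarrow> psd (B - A)"

definition op_norm :: "real^('p::finite)^'p \<Rightarrow> real" where
  "op_norm A = onorm (\<lambda>x. A *v x)"

definition frob :: "real^('p::finite)^'p \<Rightarrow> real^('p::finite)^'p \<Rightarrow> real" where
  "frob A B = trace (transpose A ** B)"

definition density_matrices :: "(real^('p::finite)^'p) set" where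
  "density_matrices = {\<rho>. symmetric_mat \<rho> \<and> psd \<rho> \<and> trace \<rho> = 1}"

(* capped simplex \<Delta>_{I,eps'} ; weights are functions nat => real, only values on I matter *)
definition capped_simplex :: "nat set \<Rightarrow> real \<Rightarrow> (nat \<Rightarrow> real) set" where
  "capped_simplex I eps' = {w. (\<Sum>n\<in>I. w n) = 1 \<and>
      (\<forall>n\<in>I. 0 \<le> w n \<and> w n \<le> 1 / ((1 - eps') * real (card I)))}"

definition Smat :: "nat \<Rightarrow> (nat \<Rightarrow> real^('p::finite)) \<Rightarrow> (nat \<Rightarrow> real) \<Rightarrow> real^('p::finite) \<Rightarrow> real^('p::finite)^'p" where
  "Smat N g w mu = (\<Sum>n<N. w n *\<^sub>R outer (g n - mu) (g n - mu))"

definition gamma :: "nat \<Rightarrow> (nat \<Rightarrow> real^('p::finite)) \<Rightarrow> (nat \<Rightarrow> real) \<Rightarrow> real^('p::finite) \<Rightarrow> real" where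
  "gamma N g w mu = op_norm (Smat N g w mu)"

definition OPT :: "nat \<Rightarrow> real \<Rightarrow> (nat \<Rightarrow> real^('p::finite)) \<Rightarrow> real^('p::finite) \<Rightarrow> real" where
  "OPT N eps g mu = Inf ((\<lambda>w. Sup ((\<lambda>\<rho>. frob (Smat N g w mu) \<rho>) ` density_matrices))
                         ` capped_simplex {..<N} eps)"

definition nu_diam :: "nat \<Rightarrow> (nat \<Rightarrow> real^('p::finite)) \<Rightarrow> real" where
  "nu_diam N g = Max {(norm (g i - g j))\<^sup>2 | i j. i < N \<and> j < N}"

definition inlier_stable ::
  "nat \<Rightarrow> real \<Rightarrow> (nat \<Rightarrow> real^('p::finite)) \<Rightarrow> nat set \<Rightarrow> nat set \<Rightarrow> real^('p::finite) \<Rightarrow> real^('p::finite)^'p \<Rightarrow> real \<Rightarrow> real \<Rightarrow> bool" where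
  "inlier_stable N eps g Iin Iout mu_g Sigma_g d_mu d_Sigma \<longleftrightarrow>
     Iin \<union> Iout = {..<N} \<and> Iin \<inter> Iout = {} \<and> real (card Iout) \<le> eps * real N \<and>
     symmetric_mat Sigma_g \<and> psd Sigma_g \<and> 0 \<le> d_mu \<and> 0 \<le> d_Sigma \<and>
     (\<forall>w \<in> capped_simplex Iin (eps / (1 - eps)).
        norm (\<Sum>n\<in>Iin. w n *\<^sub>R (g n - mu_g)) \<le> d_mu \<and>
        loewner_le (\<Sum>n\<in>Iin. w n *\<^sub>R outer (g n - mu_g) (g n - mu_g))
                   (Sigma_g + d_Sigma *\<^sub>R mat 1))"

end

theory Submission
  imports Defs
begin

(* In the direction v of the deviation of the new centre sum_n wbar_n g_n from mu_g, the
   projections a_n = <g_n - mu_g, v> have wbar-variance about <mu - mu_g, v> at most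
   gamma(wbar; mu).  The outliers carry wbar-weight at most eps/(1-eps), and the renormalised
   inlier weights lie in the stability simplex, so the inlier part of the mean is at most d_mu,
   while by Cauchy-Schwarz the outliers shift it by at most sqrt(eps/(1-2eps)) sqrt(gamma).
   Uniform weights on the inliers witness OPT(mu) <= ||Sigma_g|| + d_Sigma + 2 d_mu e + e^2,
   hence sqrt gamma <= sqrt(||Sigma_g|| + d_Sigma + delta_T) + e + d_mu. *)

lemma inner_matrix_vector_mult_eq_sum:
  "x \<bullet> (A *v x) = (\<Sum>i\<in>UNIV. \<Sum>j\<in>UNIV. x$i * A$i$j * x$j)"
  by (simp add: inner_vec_def matrix_vector_mult_def sum_distrib_left mult.assoc)

lemma inner_outer_self: "x \<bullet> (outer u u *v x) = (u \<bullet> x)\<^sup>2"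
  unfolding inner_matrix_vector_mult_eq_sum outer_def
  by (simp add: inner_vec_def power2_eq_square sum_product mult_ac)

lemma frob_eq_sum: "frob A B = (\<Sum>i\<in>UNIV. \<Sum>k\<in>UNIV. A$k$i * B$k$i)"
  by (simp add: frob_def trace_def matrix_matrix_mult_def transpose_def)

lemma frob_outer_right: "frob A (outer r r) = r \<bullet> (A *v r)"
  unfolding frob_eq_sum inner_matrix_vector_mult_eq_sum outer_def
  by simp (subst sum.swap, simp add: mult_ac)

lemma frob_diff_right: "frob A (B - C) = frob A B - frob A C"
  by (simp add: frob_eq_sum algebra_simps sum_subtractf)

lemma frob_scaleR_right: "frob A (c *\<^sub>R B) = c * frob A B"
  by (simp add: frob_eq_sum algebra_simps sum_distrib_left)

lemma frob_diff_left: "frob (A - B) C = frob A C - frob B C"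
  by (simp add: frob_eq_sum algebra_simps sum_subtractf)

lemma frob_scaleR_left: "frob (c *\<^sub>R A) C = c * frob A C"
  by (simp add: frob_eq_sum algebra_simps sum_distrib_left)

lemma frob_mat_1_left: "frob (mat 1) C = trace C"
  by (simp add: frob_eq_sum trace_def mat_def mult_if_delta)

lemma symmetric_mat_entry: "symmetric_mat \<rho> \<Longrightarrow> \<rho>$a$b = \<rho>$b$a"
  unfolding symmetric_mat_def by (metis transpose_def vec_lambda_beta)

lemma psd_diag_nonneg: "psd \<rho> \<Longrightarrow> 0 \<le> \<rho>$i$i"
  unfolding psd_def
  by (erule allE[of _ "axis i 1"]) (simp add: matrix_vector_mult_basis inner_axis' column_def)

lemma inner_shift_axis:
  assumes "symmetric_mat \<rho>"
  shows "(x - t *\<^sub>R axis i 1) \<bullet> (\<rho> *v (x - t *\<^sub>R axis i 1))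
     = x \<bullet> (\<rho> *v x) - 2 * t * (column i \<rho> \<bullet> x) + t\<^sup>2 * \<rho>$i$i"
proof -
  have row: "(\<rho> *v x) $ i = column i \<rho> \<bullet> x"
    using symmetric_mat_entry[OF assms]
    by (simp add: matrix_vector_mult_def inner_vec_def column_def mult.commute)
  show ?thesis
    by (simp add: column_def inner_diff_left inner_diff_right matrix_vector_mult_diff_distrib
        matrix_vector_mult_basis row inner_axis' inner_commute[of x] power2_eq_square algebra_simps
        flip: scaleR_matrix_vector_assoc)
qed

lemma psd_column_eq_0:
  assumes sym: "symmetric_mat \<rho>" and "psd \<rho>" and "\<rho>$i$i = 0"
  shows "column i \<rho> = 0"
proof -
  let ?r = "column i \<rho>"
  have "?r \<bullet> x = 0" for x
  proof (rule ccontr)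
    assume ne: "?r \<bullet> x \<noteq> 0"
    define t where "t = (x \<bullet> (\<rho> *v x) + 1) / (2 * (?r \<bullet> x))"
    have "2 * t * (?r \<bullet> x) = x \<bullet> (\<rho> *v x) + 1" using ne unfolding t_def by simp
    moreover have "0 \<le> x \<bullet> (\<rho> *v x) - 2 * t * (?r \<bullet> x)"
      using \<open>psd \<rho>\<close> inner_shift_axis[OF sym, of x t i] \<open>\<rho>$i$i = 0\<close> unfolding psd_def
      by (metis add.right_neutral mult_zero_right)
    ultimately show False by simp
  qed
  then show ?thesis by (metis inner_eq_zero_iff)
qed

lemma psd_schur_complement:
  assumes sym: "symmetric_mat \<rho>" and "psd \<rho>" and pos: "0 < \<rho>$i$i"
  defines "r \<equiv> column i \<rho>"
  shows "psd (\<rho> - (1 / \<rho>$i$i) *\<^sub>R outer r r)"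
  unfolding psd_def
proof
  fix x
  have "x \<bullet> ((\<rho> - (1 / \<rho>$i$i) *\<^sub>R outer r r) *v x) = x \<bullet> (\<rho> *v x) - (r \<bullet> x)\<^sup>2 / \<rho>$i$i"
    by (simp add: matrix_vector_mult_diff_rdistrib inner_diff_right inner_outer_self
        flip: scaleR_matrix_vector_assoc)
  also have "\<dots> = x \<bullet> (\<rho> *v x) - 2 * ((r \<bullet> x) / \<rho>$i$i) * (r \<bullet> x) + ((r \<bullet> x) / \<rho>$i$i)\<^sup>2 * \<rho>$i$i"
    using pos by (simp add: field_simps power2_eq_square)
  also have "\<dots> \<ge> 0"
    using \<open>psd \<rho>\<close> inner_shift_axis[OF sym] unfolding psd_def r_def by metis
  finally show "0 \<le> x \<bullet> ((\<rho> - (1 / \<rho>$i$i) *\<^sub>R outer r r) *v x)" .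
qed

(* Peel off the rank-one terms r r^T / rho_ii of rho row by row (Schur complements);
   each contributes r^T A r / rho_ii >= 0. *)

lemma frob_nonneg_if_rows_in:
  assumes "psd A" and "finite K"
  shows "symmetric_mat \<rho> \<Longrightarrow> psd \<rho> \<Longrightarrow> (\<And>j k. j \<notin> K \<Longrightarrow> \<rho>$j$k = 0) \<Longrightarrow> 0 \<le> frob A \<rho>"
  using \<open>finite K\<close>
proof (induction K arbitrary: \<rho> rule: finite_induct)
  case empty
  then show ?case by (simp add: frob_eq_sum)
next
  case (insert i K)
  note sym = insert.prems(1) and psd\<rho> = insert.prems(2)
  define r where "r = column i \<rho>"
  show ?case
  proof (cases "\<rho>$i$i = 0")
    case True
    then have "r = 0" using psd_column_eq_0[OF sym psd\<rho>] unfolding r_def by simp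
    then have "\<rho>$j$k = 0" if "j \<notin> K" for j k
      using insert.prems(3) that symmetric_mat_entry[OF sym, of j k]
      by (cases "j = i") (auto simp: r_def vec_eq_iff column_def)
    then show ?thesis using insert.IH sym psd\<rho> by blast
  next
    case False
    then have pos: "0 < \<rho>$i$i" using psd_diag_nonneg[of \<rho> i] psd\<rho> by simp
    define \<rho>' where "\<rho>' = \<rho> - (1 / \<rho>$i$i) *\<^sub>R outer r r"
    have "symmetric_mat \<rho>'"
      using symmetric_mat_entry[OF sym] unfolding symmetric_mat_def \<rho>'_def outer_def transpose_def
      by (simp add: vec_eq_iff mult.commute)
    moreover have "psd \<rho>'" using psd_schur_complement[OF sym psd\<rho> pos] unfolding \<rho>'_def r_def .
    moreover have "\<rho>'$j$k = 0" if "j \<notin> K" for j k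
      using that insert.prems(3) pos symmetric_mat_entry[OF sym, of i k]
      by (cases "j = i") (auto simp: \<rho>'_def outer_def r_def column_def)
    ultimately have "0 \<le> frob A \<rho>'" using insert.IH by blast
    moreover have "0 \<le> frob A (outer r r)" using \<open>psd A\<close> unfolding frob_outer_right psd_def by simp
    moreover have "frob A \<rho> = frob A \<rho>' + frob A (outer r r) / \<rho>$i$i"
      unfolding \<rho>'_def frob_diff_right frob_scaleR_right by simp
    ultimately show ?thesis using pos by simp
  qed
qed

lemma frob_psd_nonneg: "psd A \<Longrightarrow> symmetric_mat \<rho> \<Longrightarrow> psd \<rho> \<Longrightarrow> 0 \<le> frob A \<rho>"
  using frob_nonneg_if_rows_in[of A UNIV \<rho>] by simp

lemma inner_le_op_norm: "x \<bullet> (A *v x) \<le> op_norm A * (norm x)\<^sup>2"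
proof -
  have "x \<bullet> (A *v x) \<le> norm x * norm (A *v x)" by (rule norm_cauchy_schwarz)
  also have "\<dots> \<le> norm x * (op_norm A * norm x)"
    unfolding op_norm_def
    by (rule mult_left_mono[OF onorm[OF matrix_vector_mul_bounded_linear]]) simp
  finally show ?thesis by (simp add: power2_eq_square mult_ac)
qed

lemma op_norm_nonneg: "0 \<le> op_norm A"
  unfolding op_norm_def by (rule onorm_pos_le[OF matrix_vector_mul_bounded_linear])

lemma frob_density_le:
  assumes "\<rho> \<in> density_matrices" and B: "\<And>x. x \<bullet> (B *v x) \<le> c * (norm x)\<^sup>2"
  shows "frob B \<rho> \<le> c"
proof -
  have "psd (c *\<^sub>R mat 1 - B)"
    unfolding psd_def
  proof
    fix x
    have "x \<bullet> ((c *\<^sub>R mat 1 - B) *v x) = c * (norm x)\<^sup>2 - x \<bullet> (B *v x)"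
      by (simp add: matrix_vector_mult_diff_rdistrib inner_diff_right power2_norm_eq_inner
          flip: scaleR_matrix_vector_assoc)
    then show "0 \<le> x \<bullet> ((c *\<^sub>R mat 1 - B) *v x)" using B[of x] by simp
  qed
  then have "0 \<le> frob (c *\<^sub>R mat 1 - B) \<rho>"
    using assms(1) frob_psd_nonneg unfolding density_matrices_def by blast
  then show ?thesis
    using assms(1) unfolding frob_diff_left frob_scaleR_left frob_mat_1_left density_matrices_def
    by simp
qed

lemma scaled_identity_in_density_matrices:
  "((1 / real CARD('p)) *\<^sub>R mat 1 :: real^'p^'p) \<in> density_matrices"
proof -
  have "x \<bullet> (((1 / real CARD('p)) *\<^sub>R mat 1) *v x) = (norm x)\<^sup>2 / real CARD('p)" for x :: "real^'p"
    by (simp add: power2_norm_eq_inner flip: scaleR_matrix_vector_assoc)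
  then show ?thesis
    unfolding density_matrices_def symmetric_mat_def psd_def
    by (simp add: transpose_def mat_def vec_eq_iff trace_def)
qed

lemma sum_matrix_vector_mult: "(\<Sum>n\<in>S. f n) *v x = (\<Sum>n\<in>S. f n *v x)"
  by (induction S rule: infinite_finite_induct) (simp_all add: matrix_vector_mult_add_rdistrib)

lemma inner_Smat: "x \<bullet> (Smat N g w mu *v x) = (\<Sum>n<N. w n * ((g n - mu) \<bullet> x)\<^sup>2)"
  unfolding Smat_def
  by (simp add: sum_matrix_vector_mult inner_sum_right inner_outer_self
      flip: scaleR_matrix_vector_assoc)

lemma psd_Smat: "(\<And>n. n < N \<Longrightarrow> 0 \<le> w n) \<Longrightarrow> psd (Smat N g w mu)"
  unfolding psd_def inner_Smat by (auto intro!: sum_nonneg)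

lemma OPT_le:
  fixes g :: "nat \<Rightarrow> real^'p"
  assumes u: "u \<in> capped_simplex {..<N} eps"
    and bound: "\<And>x. x \<bullet> (Smat N g u mu *v x) \<le> c * (norm x)\<^sup>2"
  shows "OPT N eps g mu \<le> c"
proof -
  define F where "F w = Sup ((\<lambda>\<rho>. frob (Smat N g w mu) \<rho>) ` (density_matrices :: (real^'p^'p) set))"
    for w
  let ?I = "(1 / real CARD('p)) *\<^sub>R mat 1 :: real^'p^'p"
  have "0 \<le> F w" if w: "w \<in> capped_simplex {..<N} eps" for w
  proof -
    have "psd (Smat N g w mu)" using w unfolding capped_simplex_def by (auto intro!: psd_Smat)
    then have "0 \<le> frob (Smat N g w mu) ?I"
      using scaled_identity_in_density_matrices frob_psd_nonneg
      unfolding density_matrices_def by blast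
    also have "\<dots> \<le> F w" unfolding F_def
      by (rule cSUP_upper[OF scaled_identity_in_density_matrices])
        (auto intro!: bdd_aboveI2 frob_density_le inner_le_op_norm)
    finally show ?thesis .
  qed
  then have "OPT N eps g mu \<le> F u"
    unfolding OPT_def F_def[symmetric] by (intro cInf_lower) (use u in \<open>auto intro!: bdd_belowI2\<close>)
  also have "F u \<le> c" unfolding F_def
    by (rule cSUP_least) (use scaled_identity_in_density_matrices frob_density_le bound in auto)
  finally show ?thesis .
qed

lemma weighted_sum_squared_le:
  fixes w f :: "'i \<Rightarrow> real"
  assumes "\<And>i. i \<in> I \<Longrightarrow> 0 \<le> w i"
  shows "(\<Sum>i\<in>I. w i * f i)\<^sup>2 \<le> (\<Sum>i\<in>I. w i) * (\<Sum>i\<in>I. w i * (f i)\<^sup>2)"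
proof -
  have "(\<Sum>i\<in>I. sqrt (w i) * (sqrt (w i) * f i))\<^sup>2
      \<le> (\<Sum>i\<in>I. (sqrt (w i))\<^sup>2) * (\<Sum>i\<in>I. (sqrt (w i) * f i)\<^sup>2)"
    by (rule Cauchy_Schwarz_ineq_sum)
  also have "(\<Sum>i\<in>I. sqrt (w i) * (sqrt (w i) * f i)) = (\<Sum>i\<in>I. w i * f i)"
    by (rule sum.cong) (simp_all add: assms mult.assoc[symmetric])
  also have "(\<Sum>i\<in>I. (sqrt (w i))\<^sup>2) = (\<Sum>i\<in>I. w i)"
    by (rule sum.cong) (simp_all add: assms)
  also have "(\<Sum>i\<in>I. (sqrt (w i) * f i)\<^sup>2) = (\<Sum>i\<in>I. w i * (f i)\<^sup>2)"
    by (rule sum.cong) (simp_all add: assms power_mult_distrib)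
  finally show ?thesis .
qed

lemma linear_plus_le_sqrt:
  fixes y t r G :: real
  assumes y: "0 \<le> y" "y < 1" and r: "r\<^sup>2 \<le> y * (G - (1 - y) * t\<^sup>2)"
  shows "y * t + r \<le> sqrt (y / (1 - y)) * sqrt G"
proof -
  have "(1 - y) * (y * t + r)\<^sup>2 = r\<^sup>2 + y * (1 - y) * t\<^sup>2 - y * (r - (1 - y) * t)\<^sup>2"
    by (simp add: algebra_simps power2_eq_square)
  also have "\<dots> \<le> y * G"
  proof -
    have "0 \<le> y * (r - (1 - y) * t)\<^sup>2" using y by simp
    then show ?thesis using r by (simp add: algebra_simps)
  qed
  finally have "(y * t + r)\<^sup>2 \<le> y / (1 - y) * G"
    using y by (simp add: field_simps)
  then have "sqrt ((y * t + r)\<^sup>2) \<le> sqrt (y / (1 - y) * G)" by (rule real_sqrt_le_mono)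
  then have "\<bar>y * t + r\<bar> \<le> sqrt (y / (1 - y)) * sqrt G"
    by (simp only: real_sqrt_mult real_sqrt_abs)
  then show ?thesis by linarith
qed

lemma weighted_mean_le_subset_mean:
  fixes w a :: "'i \<Rightarrow> real"
  assumes fin: "finite I" "finite J" and disj: "I \<inter> J = {}"
    and nonneg: "\<And>n. n \<in> I \<union> J \<Longrightarrow> 0 \<le> w n"
    and total: "(\<Sum>n\<in>I \<union> J. w n) = 1" and small: "(\<Sum>n\<in>J. w n) < 1"
  shows "(\<Sum>n\<in>I \<union> J. w n * a n) \<le> (\<Sum>n\<in>I. w n * a n) / (\<Sum>n\<in>I. w n)
           + sqrt ((\<Sum>n\<in>J. w n) / (1 - (\<Sum>n\<in>J. w n))) * sqrt (\<Sum>n\<in>I \<union> J. w n * (a n - b)\<^sup>2)"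
proof -
  define WI WJ where "WI = (\<Sum>n\<in>I. w n)" and "WJ = (\<Sum>n\<in>J. w n)"
  define A where "A = (\<Sum>n\<in>I. w n * a n) / WI"
  define VI VJ where "VI = (\<Sum>n\<in>I. w n * (a n - b)\<^sup>2)" and "VJ = (\<Sum>n\<in>J. w n * (a n - b)\<^sup>2)"
  define Q where "Q = (\<Sum>n\<in>J. w n * (a n - b))"
  have split: "(\<Sum>n\<in>I \<union> J. f n) = (\<Sum>n\<in>I. f n) + (\<Sum>n\<in>J. f n)" for f :: "'i \<Rightarrow> real"
    by (rule sum.union_disjoint[OF fin disj])
  have WI: "WI = 1 - WJ" using total unfolding split WI_def WJ_def by simp
  have WJ0: "0 \<le> WJ" unfolding WJ_def using nonneg by (simp add: sum_nonneg)
  have WI_pos: "0 < WI" using WI small unfolding WJ_def by simp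
  have "(WI * (A - b))\<^sup>2 \<le> WI * VI"
  proof -
    have "(\<Sum>n\<in>I. w n * (a n - b)) = (\<Sum>n\<in>I. w n * a n) - WI * b"
      unfolding WI_def by (simp add: algebra_simps sum_subtractf sum_distrib_left)
    also have "\<dots> = WI * (A - b)"
      using WI_pos unfolding A_def by (simp add: algebra_simps)
    finally show ?thesis
      unfolding WI_def VI_def by (metis weighted_sum_squared_le nonneg UnI1)
  qed
  then have VI: "WI * (A - b)\<^sup>2 \<le> VI"
    using WI_pos by (simp add: power_mult_distrib power2_eq_square mult_ac)
  \<comment> \<open>Cauchy-Schwarz on \<open>I\<close> leaves at most \<open>VI + VJ - WI (A - b)\<^sup>2\<close> of the variance to \<open>J\<close>.\<close>
  have "Q\<^sup>2 \<le> WJ * VJ"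
    unfolding Q_def WJ_def VJ_def by (rule weighted_sum_squared_le) (use nonneg in auto)
  also have "\<dots> \<le> WJ * ((VI + VJ) - (1 - WJ) * (b - A)\<^sup>2)"
    using VI WJ0 unfolding WI by (intro mult_left_mono) (auto simp: power2_commute)
  finally have "WJ * (b - A) + Q \<le> sqrt (WJ / (1 - WJ)) * sqrt (VI + VJ)"
    by (intro linear_plus_le_sqrt WJ0) (use small WJ_def in auto)
  moreover have "(\<Sum>n\<in>I \<union> J. w n * a n) = A + WJ * (b - A) + Q"
  proof -
    have "(\<Sum>n\<in>I. w n * a n) = WI * A" using WI_pos unfolding A_def by simp
    moreover have "(\<Sum>n\<in>J. w n * a n) = Q + WJ * b"
      unfolding Q_def WJ_def by (simp add: algebra_simps sum_subtractf sum_distrib_left)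
    ultimately show ?thesis unfolding split WI by (simp add: algebra_simps)
  qed
  ultimately show ?thesis
    unfolding split A_def WI_def WJ_def VI_def VJ_def by simp
qed

lemma odds_le:
  fixes x eps :: real
  assumes "0 \<le> x" "x \<le> eps / (1 - eps)" "0 < eps" "eps < 1/2"
  shows "x < 1" and "x / (1 - x) \<le> eps / (1 - 2 * eps)"
proof -
  have lt: "eps / (1 - eps) < 1" using assms by (simp add: field_simps)
  then show "x < 1" using assms by linarith
  then have "x / (1 - x) \<le> (eps / (1 - eps)) / (1 - eps / (1 - eps))"
    using assms lt by (intro frac_le) auto
  also have "1 - eps / (1 - eps) = (1 - 2 * eps) / (1 - eps)" using assms by (simp add: field_simps)
  finally show "x / (1 - x) \<le> eps / (1 - 2 * eps)" using assms by simp
qed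

lemma inlier_stable_partition:
  assumes "inlier_stable N eps g Iin Iout mu_g Sigma_g d_mu d_Sigma"
  shows "finite Iin" "finite Iout" "Iin \<inter> Iout = {}" "Iin \<union> Iout = {..<N}"
    and "real (card Iin) = real N - real (card Iout)" "real (card Iout) \<le> eps * real N"
proof -
  from assms have un: "Iin \<union> Iout = {..<N}" and dis: "Iin \<inter> Iout = {}"
    and "real (card Iout) \<le> eps * real N"
    unfolding inlier_stable_def by auto
  moreover have fin: "finite Iin" "finite Iout" using un by (metis finite_Un finite_lessThan)+
  moreover have "card Iin + card Iout = N" using card_Un_disjoint[OF fin dis] un by simp
  ultimately show "finite Iin" "finite Iout" "Iin \<inter> Iout = {}" "Iin \<union> Iout = {..<N}"
    "real (card Iin) = real N - real (card Iout)" "real (card Iout) \<le> eps * real N"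
    by auto
qed

lemma inlier_stable_mean:
  "inlier_stable N eps g Iin Iout mu_g Sigma_g d_mu d_Sigma \<Longrightarrow> w \<in> capped_simplex Iin (eps / (1 - eps))
    \<Longrightarrow> norm (\<Sum>n\<in>Iin. w n *\<^sub>R (g n - mu_g)) \<le> d_mu"
  unfolding inlier_stable_def by simp

lemma uniform_inlier_weights:
  assumes stable: "inlier_stable N eps g Iin Iout mu_g Sigma_g d_mu d_Sigma"
    and eps: "0 < eps" "eps < 1/2" and N: "1 \<le> N"
  defines "u \<equiv> \<lambda>n. if n \<in> Iin then 1 / real (card Iin) else 0"
  shows "u \<in> capped_simplex {..<N} eps" and "u \<in> capped_simplex Iin (eps / (1 - eps))"
proof -
  note card = inlier_stable_partition[OF stable]
  have m_ge: "(1 - eps) * real N \<le> real (card Iin)" using card(5,6) by (simp add: algebra_simps)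
  have pos: "0 < (1 - eps) * real N" using eps N by simp
  have m_pos: "0 < real (card Iin)" using m_ge pos by linarith
  have sum_in: "(\<Sum>n\<in>Iin. u n) = 1" using m_pos unfolding u_def by simp
  have "(\<Sum>n<N. u n) = (\<Sum>n\<in>Iin. u n)"
    using card(4) by (intro sum.mono_neutral_right) (auto simp: u_def)
  moreover have "1 / real (card Iin) \<le> 1 / ((1 - eps) * real N)"
    using m_ge pos by (intro divide_left_mono) auto
  ultimately show "u \<in> capped_simplex {..<N} eps"
    unfolding capped_simplex_def using sum_in m_pos pos by (auto simp: u_def)
  have "0 < 1 - eps / (1 - eps)" "1 - eps / (1 - eps) \<le> 1" using eps by (auto simp: field_simps)
  then have "1 / real (card Iin) \<le> 1 / ((1 - eps / (1 - eps)) * real (card Iin))"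
    using m_pos by (intro divide_left_mono) (auto simp: mult_le_cancel_right1)
  then show "u \<in> capped_simplex Iin (eps / (1 - eps))"
    unfolding capped_simplex_def using sum_in m_pos by (auto simp: u_def)
qed

lemma inner_Smat_inlier_le:
  assumes stable: "inlier_stable N eps g Iin Iout mu_g Sigma_g d_mu d_Sigma"
    and u: "u \<in> capped_simplex Iin (eps / (1 - eps))" and supp: "\<And>n. n \<notin> Iin \<Longrightarrow> u n = 0"
  shows "x \<bullet> (Smat N g u mu *v x)
    \<le> (op_norm Sigma_g + d_Sigma + 2 * d_mu * norm (mu - mu_g) + (norm (mu - mu_g))\<^sup>2) * (norm x)\<^sup>2"
proof -
  define c where "c = mu - mu_g"
  define y where "y n = g n - mu_g" for n
  define d where "d = (\<Sum>n\<in>Iin. u n *\<^sub>R y n)"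
  define M where "M = (\<Sum>n\<in>Iin. u n *\<^sub>R outer (y n) (y n))"
  note card = inlier_stable_partition[OF stable]
  have sum_u: "(\<Sum>n\<in>Iin. u n * k) = k" for k
    using u unfolding capped_simplex_def by (simp flip: sum_distrib_right)
  have d: "norm d \<le> d_mu" and M: "loewner_le M (Sigma_g + d_Sigma *\<^sub>R mat 1)"
    using stable u unfolding inlier_stable_def d_def M_def y_def by auto
  have "x \<bullet> (Smat N g u mu *v x) = (\<Sum>n\<in>Iin. u n * ((g n - mu) \<bullet> x)\<^sup>2)"
    unfolding inner_Smat using card(4) supp by (intro sum.mono_neutral_right) auto
  also have "\<dots> = (\<Sum>n\<in>Iin. u n * (y n \<bullet> x - c \<bullet> x)\<^sup>2)"
    by (simp add: y_def c_def inner_diff_left)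
  also have "\<dots> = x \<bullet> (M *v x) - 2 * (c \<bullet> x) * (d \<bullet> x) + (c \<bullet> x)\<^sup>2"
    unfolding M_def d_def sum_matrix_vector_mult inner_sum_right inner_sum_left
    by (simp add: inner_outer_self inner_commute power2_eq_square algebra_simps sum.distrib
        sum_subtractf sum_distrib_left sum_distrib_right sum_u flip: scaleR_matrix_vector_assoc)
  also have "\<dots> \<le> (op_norm Sigma_g + d_Sigma) * (norm x)\<^sup>2 + 2 * (norm c * norm x) * (d_mu * norm x)
      + (norm c * norm x)\<^sup>2"
  proof -
    have "x \<bullet> (M *v x) \<le> x \<bullet> (Sigma_g *v x) + d_Sigma * (norm x)\<^sup>2"
      using M unfolding loewner_le_def psd_def
      by (simp add: matrix_vector_mult_diff_rdistrib matrix_vector_mult_add_rdistrib inner_diff_right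
          inner_add_right power2_norm_eq_inner flip: scaleR_matrix_vector_assoc)
    moreover have "x \<bullet> (Sigma_g *v x) \<le> op_norm Sigma_g * (norm x)\<^sup>2" by (rule inner_le_op_norm)
    moreover have cx: "\<bar>c \<bullet> x\<bar> \<le> norm c * norm x" by (rule Cauchy_Schwarz_ineq2)
    moreover have "\<bar>d \<bullet> x\<bar> \<le> d_mu * norm x"
      using Cauchy_Schwarz_ineq2[of d x] d by (meson mult_right_mono norm_ge_zero order_trans)
    then have "\<bar>(c \<bullet> x) * (d \<bullet> x)\<bar> \<le> (norm c * norm x) * (d_mu * norm x)"
      unfolding abs_mult using cx by (intro mult_mono) auto
    moreover have "(c \<bullet> x)\<^sup>2 \<le> (norm c * norm x)\<^sup>2"
      using cx by (metis abs_ge_zero power2_abs power_mono)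
    ultimately show ?thesis by (simp add: algebra_simps)
  qed
  finally show ?thesis unfolding c_def by (simp add: algebra_simps power2_eq_square)
qed

lemma OPT_le_inlier:
  fixes g :: "nat \<Rightarrow> real^'p"
  assumes stable: "inlier_stable N eps g Iin Iout mu_g Sigma_g d_mu d_Sigma"
    and eps: "0 < eps" "eps < 1/2" and N: "1 \<le> N"
  shows "OPT N eps g mu \<le> op_norm Sigma_g + d_Sigma + 2 * d_mu * norm (mu - mu_g) + (norm (mu - mu_g))\<^sup>2"
  by (rule OPT_le[OF uniform_inlier_weights(1)[OF stable eps N]],
      rule inner_Smat_inlier_le[OF stable uniform_inlier_weights(2)[OF stable eps N]]) simp

lemma outlier_weight_le:
  assumes stable: "inlier_stable N eps g Iin Iout mu_g Sigma_g d_mu d_Sigma"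
    and w: "w \<in> capped_simplex {..<N} eps" and eps: "0 < eps" "eps < 1" and N: "1 \<le> N"
  shows "(\<Sum>n\<in>Iout. w n) \<le> eps / (1 - eps)"
proof -
  note card = inlier_stable_partition[OF stable]
  have "(\<Sum>n\<in>Iout. w n) \<le> real (card Iout) * (1 / ((1 - eps) * real N))"
    using w card(4) unfolding capped_simplex_def by (intro sum_bounded_above) auto
  also have "\<dots> \<le> eps * real N * (1 / ((1 - eps) * real N))"
    using card(6) eps by (intro mult_right_mono) auto
  also have "\<dots> = eps / (1 - eps)" using N by simp
  finally show ?thesis .
qed

lemma inlier_capacity_le:
  assumes stable: "inlier_stable N eps g Iin Iout mu_g Sigma_g d_mu d_Sigma"
    and eps: "0 < eps" "eps < 1/2"
  shows "(1 - eps / (1 - eps)) * real (card Iin) \<le> (1 - eps) * real N - real (card Iout)"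
proof -
  note card = inlier_stable_partition[OF stable]
  define k where "k = real (card Iout)"
  have "(1 - eps) * ((1 - eps) * real N - k) - (1 - 2 * eps) * (real N - k) = eps * (eps * real N - k)"
    by (simp add: algebra_simps)
  moreover have "0 \<le> eps * (eps * real N - k)" using eps card(6) unfolding k_def by simp
  ultimately have "(1 - 2 * eps) * (real N - k) \<le> (1 - eps) * ((1 - eps) * real N - k)" by linarith
  moreover have "1 - eps / (1 - eps) = (1 - 2 * eps) / (1 - eps)" using eps by (simp add: field_simps)
  ultimately show ?thesis
    using eps card(5) unfolding k_def by (simp add: divide_le_eq mult.commute)
qed

lemma normalized_inlier_weights:
  assumes stable: "inlier_stable N eps g Iin Iout mu_g Sigma_g d_mu d_Sigma"
    and w: "w \<in> capped_simplex {..<N} eps" and eps: "0 < eps" "eps < 1/2" and N: "1 \<le> N"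
  shows "(\<lambda>n. w n / (\<Sum>m\<in>Iin. w m)) \<in> capped_simplex Iin (eps / (1 - eps))"
proof -
  note card = inlier_stable_partition[OF stable]
  define W where "W = (\<Sum>m\<in>Iin. w m)"
  define K where "K = (1 - eps) * real N"
  define k where "k = real (card Iout)"
  have sum_w: "(\<Sum>n<N. w n) = 1" and w_le: "\<And>n. n < N \<Longrightarrow> w n \<le> 1 / K"
    and w_nonneg: "\<And>n. n < N \<Longrightarrow> 0 \<le> w n"
    using w unfolding capped_simplex_def K_def by auto
  have K_pos: "0 < K" unfolding K_def using eps N by simp
  have "W = 1 - (\<Sum>n\<in>Iout. w n)"
    using sum_w sum.union_disjoint[OF card(1-3), of w] card(4) unfolding W_def by simp
  moreover have "(\<Sum>n\<in>Iout. w n) \<le> k / K"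
    using w_le card(4) unfolding k_def by (intro sum_bounded_above[where K = "1 / K", simplified]) auto
  ultimately have W_ge: "(K - k) / K \<le> W"
    using K_pos by (simp add: diff_divide_distrib)
  have Kk: "(1 - eps / (1 - eps)) * real (card Iin) \<le> K - k"
    using inlier_capacity_le[OF stable eps] unfolding K_def k_def .
  have "0 < 1 - eps / (1 - eps)" using eps by (simp add: field_simps)
  moreover have "K \<le> real (card Iin)" using card(5,6) unfolding K_def by (simp add: algebra_simps)
  then have "0 < real (card Iin)" using K_pos by linarith
  ultimately have X_pos: "0 < (1 - eps / (1 - eps)) * real (card Iin)" by simp
  then have Kk_pos: "0 < K - k" using Kk by linarith
  have W_pos: "0 < W" using W_ge divide_pos_pos[OF Kk_pos K_pos] by linarith
  have "w n / W \<le> 1 / ((1 - eps / (1 - eps)) * real (card Iin))" if n: "n \<in> Iin" for n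
  proof -
    have "w n / W \<le> (1 / K) / ((K - k) / K)"
      using w_le[of n] w_nonneg[of n] n card(4) W_ge W_pos Kk_pos K_pos
      by (intro frac_le) auto
    also have "\<dots> = 1 / (K - k)" using K_pos by simp
    also have "\<dots> \<le> 1 / ((1 - eps / (1 - eps)) * real (card Iin))"
      using Kk X_pos by (intro divide_left_mono) auto
    finally show ?thesis .
  qed
  moreover have "0 \<le> w n" if "n \<in> Iin" for n using w_nonneg card(4) that by auto
  ultimately show ?thesis
    using W_pos unfolding capped_simplex_def W_def[symmetric]
    by (auto simp: sum_divide_distrib[symmetric] W_def)
qed

lemma inlier_projected_mean_le:
  assumes stable: "inlier_stable N eps g Iin Iout mu_g Sigma_g d_mu d_Sigma"
    and w: "w \<in> capped_simplex {..<N} eps" and eps: "0 < eps" "eps < 1/2" and N: "1 \<le> N"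
    and v: "norm v = 1"
  shows "(\<Sum>n\<in>Iin. w n * ((g n - mu_g) \<bullet> v)) / (\<Sum>n\<in>Iin. w n) \<le> d_mu"
proof -
  have "(\<Sum>n\<in>Iin. w n * ((g n - mu_g) \<bullet> v)) / (\<Sum>n\<in>Iin. w n)
      = (\<Sum>n\<in>Iin. (w n / (\<Sum>m\<in>Iin. w m)) *\<^sub>R (g n - mu_g)) \<bullet> v"
    by (simp add: inner_sum_left sum_divide_distrib)
  also have "\<dots> \<le> norm (\<Sum>n\<in>Iin. (w n / (\<Sum>m\<in>Iin. w m)) *\<^sub>R (g n - mu_g))"
    using norm_cauchy_schwarz[of _ v] v by simp
  also have "\<dots> \<le> d_mu"
    by (rule inlier_stable_mean[OF stable normalized_inlier_weights[OF stable w eps N]])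
  finally show ?thesis .
qed

lemma projected_variance_le_gamma:
  assumes "norm v = 1"
  shows "(\<Sum>n<N. w n * ((g n - mu) \<bullet> v)\<^sup>2) \<le> gamma N g w mu"
  using inner_le_op_norm[of v "Smat N g w mu"] assms unfolding inner_Smat gamma_def by simp

lemma weighted_mean_deviation_le:
  fixes g :: "nat \<Rightarrow> real^'p"
  assumes stable: "inlier_stable N eps g Iin Iout mu_g Sigma_g d_mu d_Sigma"
    and w: "w \<in> capped_simplex {..<N} eps" and eps: "0 < eps" "eps < 1/2" and N: "1 \<le> N"
  shows "norm ((\<Sum>n<N. w n *\<^sub>R g n) - mu_g)
    \<le> d_mu + sqrt (eps / (1 - 2 * eps)) * sqrt (gamma N g w mu)"
proof -
  note card = inlier_stable_partition[OF stable]
  define D where "D = (\<Sum>n<N. w n *\<^sub>R g n) - mu_g"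
  have sum_w: "(\<Sum>n<N. w n) = 1" and w_nonneg: "\<And>n. n < N \<Longrightarrow> 0 \<le> w n"
    using w unfolding capped_simplex_def by auto
  have d_mu: "0 \<le> d_mu" using stable unfolding inlier_stable_def by simp
  have D_eq: "D = (\<Sum>n<N. w n *\<^sub>R (g n - mu_g))"
    unfolding D_def by (simp add: scaleR_diff_right sum_subtractf sum_w flip: scaleR_sum_left)
  show ?thesis
  proof (cases "D = 0")
    case True
    moreover have "0 \<le> sqrt (eps / (1 - 2 * eps)) * sqrt (gamma N g w mu)"
      using eps op_norm_nonneg[of "Smat N g w mu"] unfolding gamma_def by simp
    ultimately show ?thesis using d_mu unfolding D_def by simp
  next
    case False
    define v where "v = (1 / norm D) *\<^sub>R D"
    define a where "a n = (g n - mu_g) \<bullet> v" for n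
    define b where "b = (mu - mu_g) \<bullet> v"
    define WJ where "WJ = (\<Sum>n\<in>Iout. w n)"
    have v: "norm v = 1" unfolding v_def using False by simp
    have "norm D = v \<bullet> D"
      unfolding v_def using False by (simp add: power2_norm_eq_inner[symmetric] power2_eq_square)
    then have mean: "norm D = (\<Sum>n\<in>Iin \<union> Iout. w n * a n)"
      unfolding D_eq a_def card(4) by (simp add: inner_sum_right inner_commute)
    have "(\<Sum>n\<in>Iin \<union> Iout. w n * (a n - b)\<^sup>2) = (\<Sum>n<N. w n * ((g n - mu) \<bullet> v)\<^sup>2)"
      unfolding card(4) a_def b_def by (simp add: inner_diff_left)
    also have "\<dots> \<le> gamma N g w mu" by (rule projected_variance_le_gamma[OF v])
    finally have var: "(\<Sum>n\<in>Iin \<union> Iout. w n * (a n - b)\<^sup>2) \<le> gamma N g w mu" .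
    have inlier_mean: "(\<Sum>n\<in>Iin. w n * a n) / (\<Sum>n\<in>Iin. w n) \<le> d_mu"
      unfolding a_def by (rule inlier_projected_mean_le[OF stable w eps N v])
    have "0 \<le> WJ" "WJ \<le> eps / (1 - eps)"
      using outlier_weight_le[OF stable w] eps N w_nonneg card(4) unfolding WJ_def
      by (auto intro!: sum_nonneg)
    note WJ_lt = odds_le(1)[OF this eps] and ratio = odds_le(2)[OF this eps]
    have total: "(\<Sum>n\<in>Iin \<union> Iout. w n) = 1" using sum_w card(4) by simp
    have nonneg: "0 \<le> w n" if "n \<in> Iin \<union> Iout" for n using w_nonneg that unfolding card(4) by simp
    have "norm D \<le> (\<Sum>n\<in>Iin. w n * a n) / (\<Sum>n\<in>Iin. w n)
        + sqrt (WJ / (1 - WJ)) * sqrt (\<Sum>n\<in>Iin \<union> Iout. w n * (a n - b)\<^sup>2)"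
      unfolding mean WJ_def
      by (rule weighted_mean_le_subset_mean[OF card(1-3) nonneg total WJ_lt[unfolded WJ_def]])
    also have "\<dots> \<le> d_mu + sqrt (eps / (1 - 2 * eps)) * sqrt (gamma N g w mu)"
    proof -
      have "0 \<le> (\<Sum>n\<in>Iin \<union> Iout. w n * (a n - b)\<^sup>2)" by (rule sum_nonneg) (simp add: nonneg)
      then show ?thesis
        using inlier_mean real_sqrt_le_mono[OF ratio] real_sqrt_le_mono[OF var] eps
        by (intro add_mono mult_mono) simp_all
    qed
    finally show ?thesis unfolding D_def .
  qed
qed

lemma center_error_step:
  fixes g :: "nat \<Rightarrow> real^'p"
  assumes stable: "inlier_stable N eps g Iin Iout mu_g Sigma_g d_mu d_Sigma"
    and w: "w \<in> capped_simplex {..<N} eps" and eps: "0 < eps" "eps < 1/2" and N: "1 \<le> N"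
    and slack: "0 \<le> \<delta>" and near_opt: "gamma N g w mu \<le> OPT N eps g mu + \<delta>"
  shows "norm ((\<Sum>n<N. w n *\<^sub>R g n) - mu_g)
    \<le> sqrt (eps / (1 - 2 * eps)) * norm (mu - mu_g) + (1 + sqrt (eps / (1 - 2 * eps))) * d_mu
       + sqrt (eps / (1 - 2 * eps)) * sqrt (op_norm Sigma_g + d_Sigma + \<delta>)"
proof -
  define \<alpha> where "\<alpha> = sqrt (eps / (1 - 2 * eps))"
  define \<tau> where "\<tau> = op_norm Sigma_g + d_Sigma + \<delta>"
  define e where "e = norm (mu - mu_g)"
  have d: "0 \<le> d_mu" "0 \<le> d_Sigma" using stable unfolding inlier_stable_def by auto
  have \<tau>: "0 \<le> \<tau>" unfolding \<tau>_def using d slack op_norm_nonneg[of Sigma_g] by simp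
  have "gamma N g w mu \<le> \<tau> + 2 * d_mu * e + e\<^sup>2"
    using near_opt OPT_le_inlier[OF stable eps N, of mu] unfolding \<tau>_def e_def by simp
  also have "\<dots> \<le> \<tau> + (e + d_mu)\<^sup>2" by (simp add: power2_eq_square algebra_simps)
  finally have "sqrt (gamma N g w mu) \<le> sqrt (\<tau> + (e + d_mu)\<^sup>2)" by (rule real_sqrt_le_mono)
  also have "\<dots> \<le> sqrt \<tau> + (e + d_mu)"
    using sqrt_add_le_add_sqrt[OF \<tau> zero_le_power2[of "e + d_mu"]] d unfolding e_def by simp
  finally have "\<alpha> * sqrt (gamma N g w mu) \<le> \<alpha> * (sqrt \<tau> + (e + d_mu))"
    unfolding \<alpha>_def using eps by (intro mult_left_mono) auto
  then show ?thesis
    using weighted_mean_deviation_le[OF stable w eps N, of mu]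
    unfolding \<alpha>_def[symmetric] \<tau>_def[symmetric] e_def[symmetric] by (simp add: algebra_simps)
qed

lemma affine_recurrence_bound:
  fixes e :: "nat \<Rightarrow> real"
  assumes "0 \<le> \<alpha>" "\<alpha> < 1" and step: "\<And>s. 1 \<le> s \<Longrightarrow> e (s + 1) \<le> \<alpha> * e s + R" and "1 \<le> s"
  shows "e s \<le> \<alpha> ^ (s - 1) * e 1 + (1 - \<alpha> ^ (s - 1)) / (1 - \<alpha>) * R"
proof -
  have "e (Suc n) \<le> \<alpha> ^ n * e 1 + (1 - \<alpha> ^ n) / (1 - \<alpha>) * R" for n
  proof (induction n)
    case 0
    then show ?case by simp
  next
    case (Suc n)
    have "e (Suc (Suc n)) \<le> \<alpha> * e (Suc n) + R" using step[of "Suc n"] by simp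
    also have "\<dots> \<le> \<alpha> * (\<alpha> ^ n * e 1 + (1 - \<alpha> ^ n) / (1 - \<alpha>) * R) + R"
      using Suc.IH \<open>0 \<le> \<alpha>\<close> by (simp add: mult_left_mono)
    also have "\<dots> = \<alpha> ^ Suc n * e 1 + (1 - \<alpha> ^ Suc n) / (1 - \<alpha>) * R"
      using \<open>\<alpha> < 1\<close> by (simp add: field_simps)
    finally show ?case .
  qed
  then show ?thesis using \<open>1 \<le> s\<close> by (cases s) auto
qed

lemma limsup_affine_recurrence_le:
  fixes e :: "nat \<Rightarrow> real"
  assumes "0 \<le> \<alpha>" "\<alpha> < 1" "0 \<le> R" and step: "\<And>s. 1 \<le> s \<Longrightarrow> e (s + 1) \<le> \<alpha> * e s + R"
  shows "limsup (\<lambda>s. ereal (e s)) \<le> ereal (R / (1 - \<alpha>))"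
proof -
  define b where "b s = \<alpha> ^ (s - 1) * e 1 + R / (1 - \<alpha>)" for s
  have bound: "\<forall>\<^sub>F s in sequentially. ereal (e s) \<le> ereal (b s)"
  proof (rule eventually_sequentiallyI[of 1])
    fix s :: nat assume s: "1 \<le> s"
    have "(1 - \<alpha> ^ (s - 1)) * R \<le> R" using assms(1,3) by (simp add: algebra_simps)
    then have "(1 - \<alpha> ^ (s - 1)) / (1 - \<alpha>) * R \<le> R / (1 - \<alpha>)"
      using assms(2) by (simp add: divide_right_mono)
    then show "ereal (e s) \<le> ereal (b s)"
      using affine_recurrence_bound[of \<alpha> e R s, OF assms(1,2) step s] unfolding b_def by simp
  qed
  have "(\<lambda>s. \<alpha> ^ (s - 1)) \<longlonglongrightarrow> 0"
    by (rule LIMSEQ_offset[where k = 1]) (simp add: LIMSEQ_power_zero assms)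
  then have "b \<longlonglongrightarrow> 0 * e 1 + R / (1 - \<alpha>)"
    unfolding b_def by (intro tendsto_intros)
  then have "limsup (\<lambda>s. ereal (b s)) = ereal (R / (1 - \<alpha>))"
    by (intro lim_imp_Limsup) (simp_all add: tendsto_ereal)
  moreover have "limsup (\<lambda>s. ereal (e s)) \<le> limsup (\<lambda>s. ereal (b s))"
    using bound by (rule Limsup_mono)
  ultimately show ?thesis by simp
qed

theorem mainTheorem11:
  fixes N :: nat and eps :: real and g :: "nat \<Rightarrow> real^'p" and T :: nat
    and Iin Iout :: "nat set" and mu_g :: "real^'p" and Sigma_g :: "real^'p^'p"
    and d_mu d_Sigma :: real
    and mu :: "nat \<Rightarrow> real^'p" and wbar :: "nat \<Rightarrow> nat \<Rightarrow> real"
  defines "delta_T \<equiv> 4 * nu_diam N g * (sqrt (ln (1 / (1 - eps)) / real T) + sqrt (ln (real CARD('p)) / real T))"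
      and "alpha \<equiv> sqrt (eps / (1 - 2 * eps))"
      and "e \<equiv> (\<lambda>s. norm (mu s - mu_g))"
      and "R \<equiv> (1 + sqrt (eps / (1 - 2 * eps))) * d_mu + sqrt (eps / (1 - 2 * eps)) * sqrt (op_norm Sigma_g + d_Sigma + 4 * nu_diam N g * (sqrt (ln (1 / (1 - eps)) / real T) + sqrt (ln (real CARD('p)) / real T)))"
  assumes N_pos: "1 \<le> N"
      and eps: "0 < eps" "eps < 1/3"
      and p2: "2 \<le> CARD('p)"
      and nu_pos: "0 < nu_diam N g"
      and T_large: "real T \<ge> 4 * max (ln (1 / (1 - eps))) (ln (real CARD('p)))"
      and stable: "inlier_stable N eps g Iin Iout mu_g Sigma_g d_mu d_Sigma"
      and mu1: "mu 1 \<in> convex hull (g ` {..<N})"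
      and w_feas: "\<And>s. 1 \<le> s \<Longrightarrow> wbar s \<in> capped_simplex {..<N} eps"
      and w_opt: "\<And>s. 1 \<le> s \<Longrightarrow> gamma N g (wbar s) (mu s) \<le> OPT N eps g (mu s) + delta_T"
      and mu_next: "\<And>s. 1 \<le> s \<Longrightarrow> mu (s + 1) = (\<Sum>n<N. wbar s n *\<^sub>R g n)"
  shows "(\<forall>s\<ge>1. e (s + 1) \<le> alpha * e s + R)
       \<and> (\<forall>s\<ge>1. e s \<le> alpha ^ (s - 1) * e 1 + (1 - alpha ^ (s - 1)) / (1 - alpha) * R)
       \<and> limsup (\<lambda>s. ereal (e s)) \<le> ereal (R / (1 - alpha))"
proof -
  \<comment> \<open>\<open>T_large\<close> and \<open>mu1\<close> only serve the MW-MMW guarantee, which enters here as \<open>w_opt\<close>.\<close>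
  have eps': "0 < eps" "eps < 1/2" using eps by auto
  have delta_T: "0 \<le> delta_T"
    unfolding delta_T_def using nu_pos eps p2 by simp
  have alpha: "0 \<le> alpha" "alpha < 1"
    unfolding alpha_def using eps by (auto simp: field_simps)
  have R: "0 \<le> R"
    using stable delta_T op_norm_nonneg[of Sigma_g] eps
    unfolding R_def delta_T_def inlier_stable_def by simp
  have step: "e (s + 1) \<le> alpha * e s + R" if "1 \<le> s" for s
    using center_error_step[OF stable w_feas[OF that] eps' N_pos delta_T w_opt[OF that]]
    unfolding e_def alpha_def R_def delta_T_def mu_next[OF that] by simp
  show ?thesis
    using step affine_recurrence_bound[of alpha e R, OF alpha step]
      limsup_affine_recurrence_le[of alpha R e, OF alpha R step]
    by blast
qed

end
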